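(* For every integer $t\ge1$, $$-\frac{1}{8t^2}<\frac{S_1(t)}{(-1)^t\binom{-3/2}{t}}-\frac{(-1)^t}{\binom{-3/2}{t}}\bigl(\cosh\alpha-1\bigr)+\frac{\alpha\sinh\alpha}{2t}<\frac{13}{25t^2}.$$
   Context: $\alpha=\pi/6$. $(a)_m=a(a+1)\cdots(a+m-1)$ is the rising factorial ($(a)_0=1$); $\binom{x}{m}=x(x-1)\cdots(x-m+1)/m!$. For $t\ge0$, $$S_1(t)=\sum_{s=1}^t\frac{(-1)^s(1/2-s)_{s+1}}{s}\sum_{u=1}^s\frac{(-1)^u(-s)_u}{(s+u)!\,(2u-1)!}\left(\frac{\pi^2}{36}\right)^u.$$ *)

theory Defs
  imports "HOL-Analysis.Analysis"
begin

definition alpha :: real where "alpha = pi / 6"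

definition S1 :: "nat \<Rightarrow> real" where
  "S1 t = (\<Sum>s=1..t. ((-1)^s * pochhammer (1/2 - real s) (s+1) / real s) *
      (\<Sum>u=1..s. (-1)^u * pochhammer (- real s) u / (fact (s+u) * fact (2*u-1)) * (pi^2/36)^u))"

end

theory Submission
  imports Defs
begin

(*
  Write b_s = (1/2)_s / s! = C(2s,s)/4^s, q_s(u) = s!^2/((s-u)!(s+u)!) and
  c_u = alpha^(2u)/(2u-1)!.  The s-th summand of S1 is b_s J_s/(2s) with
  J_s = sum_u q_s(u) c_u.  Summation by parts gives
  sum_{s<=t} b_s q_s(u)/s = (1 - R_t(u))/u with 0 <= R_t(u) <= 2u b_t, so S1(t) tends to
  sum_u c_u/(2u) = cosh alpha - 1.  As (2t+1) b_t = (-1)^t C(-3/2,t), the claim says that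
  S1(t) - (cosh alpha - 1) lies strictly between the envelopes
  E_K(t) = (2t+1) b_t (-alpha sinh alpha/(2t) + K/t^2) for K = -1/8 and K = 13/25.
  All three sequences tend to 0, so it suffices to compare their increments; this is a
  polynomial inequality in t once alpha sinh alpha - 2/(5s) <= J_s <= alpha sinh alpha,
  which follows from q_s(u) >= 1 - u^2/s and alpha^2 <= 2/7.
*)

lemma sum_atLeastLessThan_add_2: "sum g {m..<m+2} = g m + g (Suc m)"
  by (simp add: numeral_2_eq_2)

lemma sums_sinh_odd: "(\<lambda>n. x ^ (2 * n + 1) / fact (2 * n + 1)) sums sinh (x::real)"
proof -
  have "(\<lambda>n. \<Sum>i\<in>{n*2..<n*2+2}. if even i then 0 else x ^ i /\<^sub>R fact i) sums sinh x"
    using sinh_converges by (rule sums_group) simp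
  moreover have "(\<Sum>i\<in>{n*2..<n*2+2}. if even i then 0 else x ^ i /\<^sub>R fact i)
      = x ^ (2 * n + 1) / fact (2 * n + 1)" for n
    unfolding sum_atLeastLessThan_add_2 by (simp add: mult.commute divide_inverse)
  ultimately show ?thesis by simp
qed

lemma sums_cosh_even: "(\<lambda>n. x ^ (2 * n) / fact (2 * n)) sums cosh (x::real)"
proof -
  have "(\<lambda>n. \<Sum>i\<in>{n*2..<n*2+2}. if even i then x ^ i /\<^sub>R fact i else 0) sums cosh x"
    using cosh_converges by (rule sums_group) simp
  moreover have "(\<Sum>i\<in>{n*2..<n*2+2}. if even i then x ^ i /\<^sub>R fact i else 0)
      = x ^ (2 * n) / fact (2 * n)" for n
    unfolding sum_atLeastLessThan_add_2 by (simp add: mult.commute divide_inverse)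
  ultimately show ?thesis by simp
qed

lemma less_if_increments_less:
  fixes f g :: "nat \<Rightarrow> real"
  assumes lim: "(\<lambda>n. g n - f n) \<longlonglongrightarrow> 0"
    and incr: "\<And>m. k \<le> m \<Longrightarrow> f (Suc m) - f m < g (Suc m) - g m"
    and "k \<le> t"
  shows "g t < f t"
proof -
  define h where "h n = g n - f n" for n
  have h_less: "h m < h (Suc m)" if "k \<le> m" for m
    using incr[OF that] unfolding h_def by simp
  have "h (Suc t) \<le> h n" if "Suc t \<le> n" for n
    using that
  proof (induction n rule: dec_induct)
    case (step n)
    then show ?case using h_less[of n] \<open>k \<le> t\<close> by simp
  qed simp
  then have "h (Suc t) \<le> 0"
    using lim unfolding h_def[abs_def] by (intro LIMSEQ_le_const) auto
  then show ?thesis using h_less[OF \<open>k \<le> t\<close>] unfolding h_def by simp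
qed

lemma sum_power_atLeast1_le:
  fixes c :: real
  assumes "0 \<le> c" "c < 1"
  shows "(\<Sum>u=1..N. c ^ u) \<le> c / (1 - c)"
proof (cases "N = 0")
  case False
  then have "(1 - c) * (\<Sum>u=1..N. c ^ u) = c - c ^ Suc N"
    using sum_gp_multiplied[of 1 N c] by simp
  then have "(1 - c) * (\<Sum>u=1..N. c ^ u) \<le> c"
    using assms by simp
  then show ?thesis using assms by (simp add: le_divide_eq mult.commute)
qed (use assms in simp)

lemma square_le_fact_double_minus_1: "1 \<le> u \<Longrightarrow> real u ^ 2 \<le> fact (2 * u - 1)"
proof (induction u rule: nat_induct_at_least)
  case (Suc n)
  have "1 \<le> real n" using Suc.hyps by simp
  have "real (Suc n) ^ 2 \<le> (2 * real n) ^ 2"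
    using \<open>1 \<le> real n\<close> by (intro power_mono) auto
  also have "\<dots> \<le> (2 * real n) * ((2 * real n + 1) * real n ^ 2)"
  proof -
    have "2 * real n \<le> (2 * real n + 1) * real n ^ 2"
      using \<open>1 \<le> real n\<close> by (simp add: mult_mono' self_le_power)
    then show ?thesis
      unfolding power2_eq_square[of "2 * real n"] by (intro mult_left_mono) auto
  qed
  also have "\<dots> \<le> (2 * real n) * ((2 * real n + 1) * fact (2 * n - 1))"
    using Suc.IH by (intro mult_left_mono) auto
  also have "\<dots> = fact (2 * Suc n - 1)"
    using Suc.hyps by (simp add: fact_reduce algebra_simps)
  finally show ?case .
qed simp

lemma fact_mult_pochhammer:
  "fact m * pochhammer (of_nat m + 1) n = (fact (m + n) :: 'a :: {semiring_char_0, comm_semiring_1})"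
  by (simp only: pochhammer_fact pochhammer_product' add.commute[of "of_nat m" 1])

section \<open>Ratios of binomial coefficients\<close>

fun binom_ratio :: "nat \<Rightarrow> nat \<Rightarrow> real" where
  "binom_ratio t 0 = 1"
| "binom_ratio t (Suc j) = binom_ratio t j * (real t - real j) / (real t + real j + 1)"

lemma binom_ratio_eq_0: "t < j \<Longrightarrow> binom_ratio t j = 0"
  by (induction j) (auto simp: less_Suc_eq)

lemma binom_ratio_bounds: "0 \<le> binom_ratio t j \<and> binom_ratio t j \<le> 1"
proof (induction j)
  case (Suc j)
  show ?case
  proof (cases "j < t")
    case True
    define c where "c = (real t - real j) / (real t + real j + 1)"
    have "0 \<le> c" "c \<le> 1" using True unfolding c_def by (simp_all add: divide_le_eq_1)
    then have "0 \<le> binom_ratio t j * c \<and> binom_ratio t j * c \<le> 1"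
      using Suc.IH by (simp add: mult_le_one)
    then show ?thesis unfolding c_def by simp
  next
    case False
    then show ?thesis by (simp add: binom_ratio_eq_0 del: binom_ratio.simps)
  qed
qed simp

lemma one_minus_binom_ratio_le:
  assumes "0 < t"
  shows "1 - binom_ratio t j \<le> real j ^ 2 / real t"
proof (cases "j \<le> t")
  case True
  then show ?thesis
  proof (induction j)
    case (Suc j)
    have "binom_ratio t (Suc j) = binom_ratio t j - binom_ratio t j * ((2 * real j + 1) / (real t + real j + 1))"
      by (simp add: field_simps)
    moreover have "binom_ratio t j * ((2 * real j + 1) / (real t + real j + 1))
        \<le> (2 * real j + 1) / (real t + real j + 1)"
      using binom_ratio_bounds[of t j] by (intro mult_left_le_one_le) auto
    moreover have "(2 * real j + 1) / (real t + real j + 1) \<le> (2 * real j + 1) / real t"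
      using assms by (intro frac_le) auto
    moreover have "real (Suc j) ^ 2 / real t = real j ^ 2 / real t + (2 * real j + 1) / real t"
      by (simp add: add_divide_distrib power2_eq_square algebra_simps)
    ultimately show ?case using Suc by simp
  qed simp
next
  case False
  then have "real t \<le> real j ^ 2"
    by (metis le_square nat_le_linear of_nat_le_iff of_nat_power order_trans power2_eq_square)
  then show ?thesis using False assms by (simp add: binom_ratio_eq_0)
qed

lemma binom_ratio_eq_fact:
  assumes "u \<le> s"
  shows "binom_ratio s u = fact s * fact s / (fact (s - u) * fact (s + u))"
proof -
  have "binom_ratio s u * (fact (s - u) * fact (s + u)) = fact s * fact s"
    using assms
  proof (induction u)
    case (Suc u)
    have fact_diff: "fact (s - u) = (real s - real u) * fact (s - Suc u)"
      using Suc.prems by (metis Suc_diff_Suc Suc_le_lessD fact_Suc of_nat_diff less_imp_le_nat)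
    define c where "c = real s + real u + 1"
    have "c \<noteq> 0" unfolding c_def by simp
    have "fact (s + Suc u) = c * fact (s + u)"
      and "binom_ratio s (Suc u) = binom_ratio s u * (real s - real u) / c"
      unfolding c_def by simp_all
    then have "binom_ratio s (Suc u) * (fact (s - Suc u) * fact (s + Suc u))
        = binom_ratio s u * (real s - real u) / c * (fact (s - Suc u) * (c * fact (s + u)))"
      by (simp only:)
    also have "\<dots> = binom_ratio s u * (fact (s - u) * fact (s + u))"
      unfolding fact_diff using \<open>c \<noteq> 0\<close> by (simp add: field_simps)
    finally show ?case using Suc by simp
  qed simp
  then show ?thesis by (simp add: eq_divide_eq)
qed

lemma binom_ratio_Suc_left:
  "binom_ratio t u * (real t + 1) ^ 2
     = binom_ratio (Suc t) u * (real t + 1 - real u) * (real t + 1 + real u)"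
proof (induction u)
  case (Suc u)
  have "binom_ratio t (Suc u) * (real t + 1) ^ 2
      = binom_ratio t u * (real t + 1) ^ 2 * (real t - real u) / (real t + real u + 1)"
    by simp
  also have "\<dots> = binom_ratio (Suc t) (Suc u) * (real t - real u) * (real t + 1 + real (Suc u))"
    unfolding Suc.IH by (simp add: field_simps)
  finally show ?case by simp
qed (simp add: power2_eq_square)

definition central_binom_ratio :: "nat \<Rightarrow> real" where
  "central_binom_ratio s = pochhammer (1/2) s / fact s"

lemma central_binom_ratio_0 [simp]: "central_binom_ratio 0 = 1"
  by (simp add: central_binom_ratio_def)

lemma central_binom_ratio_Suc:
  "central_binom_ratio (Suc s) = central_binom_ratio s * (2 * real s + 1) / (2 * real s + 2)"
  unfolding central_binom_ratio_def by (simp add: pochhammer_Suc field_simps)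

lemma central_binom_ratio_pos: "0 < central_binom_ratio s"
  by (induction s) (simp_all add: central_binom_ratio_Suc)

lemma central_binom_ratio_square_le: "central_binom_ratio t ^ 2 \<le> 1 / (real t + 1)"
proof (induction t)
  case (Suc t)
  define a where "a = real t"
  have "central_binom_ratio (Suc t) ^ 2 = central_binom_ratio t ^ 2 * ((2 * a + 1) / (2 * a + 2)) ^ 2"
    unfolding central_binom_ratio_Suc a_def by (simp add: power_mult_distrib power_divide)
  also have "\<dots> \<le> 1 / (a + 1) * ((2 * a + 1) / (2 * a + 2)) ^ 2"
    using Suc.IH unfolding a_def by (intro mult_right_mono) auto
  also have "\<dots> \<le> 1 / (a + 2)"
  proof -
    have "(2 * a + 1) ^ 2 * (a + 2) \<le> (a + 1) * (2 * a + 2) ^ 2"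
      unfolding a_def by (simp add: power2_eq_square algebra_simps)
    moreover have "0 < (a + 1) * (2 * a + 2) ^ 2" "0 < a + 2" unfolding a_def by simp_all
    ultimately show ?thesis by (simp add: power_divide divide_simps)
  qed
  finally show ?case unfolding a_def by (simp add: add.commute)
qed simp

lemma LIMSEQ_central_binom_ratio: "central_binom_ratio \<longlonglongrightarrow> 0"
proof -
  have "(\<lambda>t. central_binom_ratio t ^ 2) \<longlonglongrightarrow> 0"
  proof (rule Lim_null_comparison[OF _ LIMSEQ_inverse_real_of_nat])
    show "\<forall>\<^sub>F t in sequentially. norm (central_binom_ratio t ^ 2) \<le> inverse (real (Suc t))"
      using central_binom_ratio_square_le
      by (intro always_eventually allI) (simp add: divide_inverse add.commute)
  qed
  then have "(\<lambda>t. sqrt (central_binom_ratio t ^ 2)) \<longlonglongrightarrow> sqrt 0"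
    by (rule tendsto_real_sqrt)
  then show ?thesis using central_binom_ratio_pos by (simp add: less_imp_le)
qed

lemma gbinomial_minus_three_halves:
  "(-1) ^ t * ((-3/2) gchoose t) = (2 * real t + 1) * central_binom_ratio t"
proof -
  have "pochhammer (1/2 :: real) (Suc t) = 1/2 * pochhammer (3/2) t"
    by (simp add: pochhammer_rec)
  then have "pochhammer (3/2 :: real) t = (2 * real t + 1) * pochhammer (1/2) t"
    by (simp add: pochhammer_Suc algebra_simps)
  moreover have "(-1::real) ^ t * (-1) ^ t = 1"
    by (simp add: power_mult_distrib[symmetric])
  ultimately show ?thesis
    unfolding central_binom_ratio_def gbinomial_pochhammer by (simp add: mult.assoc[symmetric])
qed

section \<open>Summation by parts\<close>

lemma central_binom_ratio_binom_ratio_pair: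
  "central_binom_ratio t * (binom_ratio t u + binom_ratio t (Suc u))
     = central_binom_ratio (Suc t) * (binom_ratio (Suc t) u + binom_ratio (Suc t) (Suc u)
       + ((real u + 1) * binom_ratio (Suc t) (Suc u) - real u * binom_ratio (Suc t) u) / (real t + 1))"
proof -
  define Q where "Q = binom_ratio (Suc t) u"
  define x where "x = real t + 1"
  define U where "U = real u"
  have "x \<noteq> 0" unfolding x_def by simp
  define V where "V = x + U"
  have "V \<noteq> 0" unfolding V_def x_def U_def by simp
  have shift: "binom_ratio t u = Q * (x - U) * V / x ^ 2"
    using binom_ratio_Suc_left[of t u] \<open>x \<noteq> 0\<close> unfolding Q_def x_def U_def V_def
    by (simp add: field_simps)
  have "binom_ratio t u + binom_ratio t (Suc u) = binom_ratio t u * ((2 * x - 1) / V)"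
    unfolding x_def U_def V_def by (simp add: field_simps)
  also have "\<dots> = Q * (x - U) * (2 * x - 1) / x ^ 2"
    unfolding shift using \<open>x \<noteq> 0\<close> \<open>V \<noteq> 0\<close> by (simp add: field_simps)
  finally have left: "binom_ratio t u + binom_ratio t (Suc u) = Q * (x - U) * (2 * x - 1) / x ^ 2" .
  define W where "W = x + U + 1"
  have "W \<noteq> 0" unfolding W_def x_def U_def by simp
  have "binom_ratio (Suc t) (Suc u) = Q * (x - U) / W"
    unfolding Q_def x_def U_def W_def by (simp add: algebra_simps)
  then have "binom_ratio (Suc t) u + binom_ratio (Suc t) (Suc u)
      + ((real u + 1) * binom_ratio (Suc t) (Suc u) - real u * binom_ratio (Suc t) u) / (real t + 1)
      = Q + Q * (x - U) / W + ((U + 1) * (Q * (x - U) / W) - U * Q) / x"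
    by (simp add: Q_def x_def U_def)
  also have "\<dots> = 2 * Q * (x - U) / x"
    using \<open>x \<noteq> 0\<close> \<open>W \<noteq> 0\<close> by (simp add: field_simps) (simp add: W_def algebra_simps)
  finally have right: "binom_ratio (Suc t) u + binom_ratio (Suc t) (Suc u)
      + ((real u + 1) * binom_ratio (Suc t) (Suc u) - real u * binom_ratio (Suc t) u) / (real t + 1)
      = 2 * Q * (x - U) / x" .
  have step: "central_binom_ratio (Suc t) = central_binom_ratio t * (2 * x - 1) / (2 * x)"
    unfolding x_def central_binom_ratio_Suc by (simp add: algebra_simps)
  show ?thesis
    unfolding left right step using \<open>x \<noteq> 0\<close> by (simp add: field_simps power2_eq_square)
qed

definition ratio_tail :: "nat \<Rightarrow> nat \<Rightarrow> real" where
  "ratio_tail t u = central_binom_ratio t * (2 * (\<Sum>j=0..u. binom_ratio t j) - 1 - binom_ratio t u)"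

lemma ratio_tail_diff_Suc:
  "ratio_tail t u - ratio_tail (Suc t) u
     = real u * central_binom_ratio (Suc t) * binom_ratio (Suc t) u / (real t + 1)"
proof (induction u)
  case 0
  then show ?case by (simp add: ratio_tail_def)
next
  case (Suc u)
  have split: "ratio_tail t' (Suc u) = ratio_tail t' u
      + central_binom_ratio t' * (binom_ratio t' u + binom_ratio t' (Suc u))" for t'
    unfolding ratio_tail_def by (simp add: algebra_simps)
  define p where "p = real t + 1"
  have "p \<noteq> 0" unfolding p_def by simp
  have "ratio_tail t (Suc u) - ratio_tail (Suc t) (Suc u) = (ratio_tail t u - ratio_tail (Suc t) u)
      + central_binom_ratio t * (binom_ratio t u + binom_ratio t (Suc u))
      - central_binom_ratio (Suc t) * (binom_ratio (Suc t) u + binom_ratio (Suc t) (Suc u))"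
    unfolding split by simp
  also have "\<dots> = real (Suc u) * central_binom_ratio (Suc t) * binom_ratio (Suc t) (Suc u) / (real t + 1)"
    using \<open>p \<noteq> 0\<close> unfolding Suc.IH central_binom_ratio_binom_ratio_pair[of t u] p_def[symmetric]
    by (simp add: field_simps del: binom_ratio.simps)
  finally show ?case .
qed

lemma ratio_tail_eq:
  assumes "1 \<le> u"
  shows "ratio_tail t u = 1 - real u * (\<Sum>s=1..t. central_binom_ratio s * binom_ratio s u / real s)"
proof (induction t)
  case 0
  have "(\<Sum>j=0..u. binom_ratio 0 j) = 1"
    by (subst sum.atLeast_Suc_atMost) (auto intro!: sum.neutral binom_ratio_eq_0)
  then show ?case using assms by (simp add: ratio_tail_def binom_ratio_eq_0)
next
  case (Suc t)
  then show ?case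
    using ratio_tail_diff_Suc[of t u] by (simp add: algebra_simps add_divide_distrib)
qed

lemma ratio_tail_bounds:
  assumes "1 \<le> u"
  shows "0 \<le> ratio_tail t u \<and> ratio_tail t u \<le> 2 * real u * central_binom_ratio t"
proof -
  have "(\<Sum>j=0..u. binom_ratio t j) = 1 + (\<Sum>j=1..u. binom_ratio t j)"
    by (simp add: sum.atLeast_Suc_atMost)
  moreover have "binom_ratio t u \<le> (\<Sum>j=1..u. binom_ratio t j)"
    using assms binom_ratio_bounds by (intro member_le_sum) auto
  moreover have "(\<Sum>j=0..u. binom_ratio t j) = (\<Sum>j<u. binom_ratio t j) + binom_ratio t u"
    by (simp add: atLeast0AtMost lessThan_Suc_atMost[symmetric])
  moreover have "(\<Sum>j<u. binom_ratio t j) \<le> real u"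
    using sum_bounded_above[of "{..<u}" "binom_ratio t" 1] binom_ratio_bounds by simp
  ultimately have "0 \<le> 2 * (\<Sum>j=0..u. binom_ratio t j) - 1 - binom_ratio t u"
    and "2 * (\<Sum>j=0..u. binom_ratio t j) - 1 - binom_ratio t u \<le> 2 * real u"
    using binom_ratio_bounds[of t u] by linarith+
  then show ?thesis
    using central_binom_ratio_pos[of t] unfolding ratio_tail_def
    by (simp add: mult_left_le mult.commute[of _ "central_binom_ratio t"])
qed

section \<open>The series of alpha sinh alpha\<close>

definition sinh_coeff :: "nat \<Rightarrow> real" where
  "sinh_coeff u = alpha ^ (2 * u) / fact (2 * u - 1)"

definition weighted_sinh_sum :: "nat \<Rightarrow> real" where
  "weighted_sinh_sum s = (\<Sum>u=1..s. binom_ratio s u * sinh_coeff u)"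

lemma sinh_coeff_nonneg: "0 \<le> sinh_coeff u"
  unfolding sinh_coeff_def by (simp add: zero_le_even_power)

lemma LIMSEQ_sum_sinh_coeff: "(\<lambda>N. \<Sum>u=1..N. sinh_coeff u) \<longlonglongrightarrow> alpha * sinh alpha"
proof -
  have "(\<lambda>n. alpha * (alpha ^ (2 * n + 1) / fact (2 * n + 1))) sums (alpha * sinh alpha)"
    by (intro sums_mult sums_sinh_odd)
  moreover have "alpha * (alpha ^ (2 * n + 1) / fact (2 * n + 1)) = sinh_coeff (Suc n)" for n
    unfolding sinh_coeff_def by simp
  ultimately show ?thesis by (simp add: sums_def sum.atLeast1_atMost_eq)
qed

lemma LIMSEQ_sum_sinh_coeff_div:
  "(\<lambda>N. \<Sum>u=1..N. sinh_coeff u / (2 * real u)) \<longlonglongrightarrow> cosh alpha - 1"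
proof -
  have "(\<lambda>n. alpha ^ (2 * Suc n) / fact (2 * Suc n)) sums (cosh alpha - 1)"
    using sums_cosh_even[of alpha] by (subst sums_Suc_iff) simp
  moreover have "alpha ^ (2 * Suc n) / fact (2 * Suc n) = sinh_coeff (Suc n) / (2 * real (Suc n))" for n
    unfolding sinh_coeff_def by (simp add: fact_reduce[of "2 * Suc n"] field_simps)
  ultimately show ?thesis by (simp add: sums_def sum.atLeast1_atMost_eq)
qed

lemma alpha_square_le: "alpha ^ 2 \<le> 2 / 7"
proof -
  have "pi ^ 2 \<le> (16 / 5) ^ 2"
    using pi_approx pi_gt_zero by (intro power_mono) auto
  then show ?thesis unfolding alpha_def by (simp add: power_divide)
qed

lemma sum_alpha_square_power_le: "(\<Sum>u=1..N. (alpha ^ 2) ^ u) \<le> 2 / 5"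
proof -
  have "(\<Sum>u=1..N. (alpha ^ 2) ^ u) \<le> alpha ^ 2 / (1 - alpha ^ 2)"
    using alpha_square_le by (intro sum_power_atLeast1_le) auto
  also have "\<dots> \<le> 2 / 5"
    using alpha_square_le by (simp add: divide_le_eq)
  finally show ?thesis .
qed

lemma square_mult_sinh_coeff_le:
  assumes "1 \<le> u"
  shows "real u ^ 2 * sinh_coeff u \<le> (alpha ^ 2) ^ u"
proof -
  have "real u ^ 2 * sinh_coeff u = (alpha ^ 2) ^ u * (real u ^ 2 / fact (2 * u - 1))"
    unfolding sinh_coeff_def power_mult by simp
  also have "\<dots> \<le> (alpha ^ 2) ^ u * 1"
    using square_le_fact_double_minus_1[OF assms] by (intro mult_left_mono) auto
  finally show ?thesis by simp
qed

lemma sinh_coeff_le: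
  assumes "1 \<le> u"
  shows "sinh_coeff u \<le> (alpha ^ 2) ^ u"
proof -
  have "1 * sinh_coeff u \<le> real u ^ 2 * sinh_coeff u"
    using assms sinh_coeff_nonneg by (intro mult_right_mono) auto
  then show ?thesis using square_mult_sinh_coeff_le[OF assms] by simp
qed

lemma sum_sinh_coeff_le: "(\<Sum>u=1..N. sinh_coeff u) \<le> 2 / 5"
proof -
  have "(\<Sum>u=1..N. sinh_coeff u) \<le> (\<Sum>u=1..N. (alpha ^ 2) ^ u)"
    by (intro sum_mono sinh_coeff_le) auto
  also have "\<dots> \<le> 2 / 5" by (rule sum_alpha_square_power_le)
  finally show ?thesis .
qed

lemma alpha_sinh_alpha_bounds: "0 \<le> alpha * sinh alpha" "alpha * sinh alpha \<le> 2 / 5"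
proof -
  show "0 \<le> alpha * sinh alpha"
    using sinh_coeff_nonneg by (intro LIMSEQ_le_const[OF LIMSEQ_sum_sinh_coeff]) (auto intro: sum_nonneg)
  show "alpha * sinh alpha \<le> 2 / 5"
    using sum_sinh_coeff_le by (intro LIMSEQ_le_const2[OF LIMSEQ_sum_sinh_coeff]) auto
qed

lemma weighted_sinh_sum_eq:
  "s \<le> n \<Longrightarrow> weighted_sinh_sum s = (\<Sum>u=1..n. binom_ratio s u * sinh_coeff u)"
  unfolding weighted_sinh_sum_def by (rule sum.mono_neutral_left) (auto simp: binom_ratio_eq_0)

lemma weighted_sinh_sum_le: "weighted_sinh_sum s \<le> alpha * sinh alpha"
proof -
  have "weighted_sinh_sum s \<le> (\<Sum>u=1..s. sinh_coeff u)"
    unfolding weighted_sinh_sum_def using binom_ratio_bounds sinh_coeff_nonneg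
    by (intro sum_mono) (simp add: mult_left_le_one_le)
  also have "\<dots> \<le> alpha * sinh alpha"
    using sinh_coeff_nonneg
    by (intro LIMSEQ_le_const[OF LIMSEQ_sum_sinh_coeff] exI[of _ s] allI impI sum_mono2) auto
  finally show ?thesis .
qed

lemma weighted_sinh_sum_ge:
  assumes "1 \<le> s"
  shows "alpha * sinh alpha - 2 / (5 * real s) \<le> weighted_sinh_sum s"
proof -
  have "(\<Sum>u=1..n. sinh_coeff u) - weighted_sinh_sum s \<le> 2 / (5 * real s)" if "s \<le> n" for n
  proof -
    have "(\<Sum>u=1..n. sinh_coeff u) - weighted_sinh_sum s = (\<Sum>u=1..n. (1 - binom_ratio s u) * sinh_coeff u)"
      unfolding weighted_sinh_sum_eq[OF that] by (simp add: sum_subtractf[symmetric] algebra_simps)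
    also have "\<dots> \<le> (\<Sum>u=1..n. (alpha ^ 2) ^ u / real s)"
    proof (rule sum_mono)
      fix u assume "u \<in> {1..n}"
      have "(1 - binom_ratio s u) * sinh_coeff u \<le> real u ^ 2 / real s * sinh_coeff u"
        using one_minus_binom_ratio_le[of s u] assms sinh_coeff_nonneg by (intro mult_right_mono) auto
      also have "\<dots> \<le> (alpha ^ 2) ^ u / real s"
        using square_mult_sinh_coeff_le[of u] \<open>u \<in> {1..n}\<close> assms by (simp add: divide_right_mono)
      finally show "(1 - binom_ratio s u) * sinh_coeff u \<le> (alpha ^ 2) ^ u / real s" .
    qed
    also have "\<dots> \<le> (2 / 5) / real s"
      unfolding sum_divide_distrib[symmetric]
      using sum_alpha_square_power_le assms by (intro divide_right_mono) auto
    finally show ?thesis by simp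
  qed
  then have "alpha * sinh alpha - weighted_sinh_sum s \<le> 2 / (5 * real s)"
    using LIMSEQ_sum_sinh_coeff
    by (intro LIMSEQ_le_const2[of "\<lambda>n. (\<Sum>u=1..n. sinh_coeff u) - weighted_sinh_sum s"])
       (auto intro!: tendsto_diff)
  then show ?thesis by simp
qed

section \<open>Rewriting S1\<close>

lemma pochhammer_half_minus: "(-1) ^ s * pochhammer (1/2 - real s) (s + 1) = pochhammer (1/2) s / (2::real)"
proof -
  have "pochhammer (1/2 - real s) (s + 1) = (-1) ^ (s + 1) * pochhammer (-1/2 :: real) (s + 1)"
    using pochhammer_minus[of "real s - 1/2" "s + 1"] by (simp add: algebra_simps)
  also have "pochhammer (-1/2 :: real) (s + 1) = -1/2 * pochhammer (1/2) s"
    by (simp add: pochhammer_rec)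
  finally have "(-1) ^ s * pochhammer (1/2 - real s) (s + 1)
      = ((-1) ^ s * (-1) ^ (s + 1)) * (-1/2 * pochhammer (1/2 :: real) s)"
    by (simp only: mult.assoc)
  also have "(-1::real) ^ s * (-1) ^ (s + 1) = -1"
    by (simp add: power_add[symmetric])
  finally show ?thesis by simp
qed

lemma pochhammer_minus_of_nat:
  assumes "u \<le> s"
  shows "(-1) ^ u * pochhammer (- real s) u = fact s / fact (s - u)"
proof -
  have "(-1) ^ u * pochhammer (- real s) u = pochhammer (real (s - u) + 1) u"
    using pochhammer_minus'[of "real s" u] assms by (simp add: of_nat_diff)
  also have "\<dots> = fact s / fact (s - u)"
    using fact_mult_pochhammer[of "s - u" u, where 'a = real] assms
    by (simp add: eq_divide_eq mult.commute of_nat_diff)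
  finally show ?thesis .
qed

lemma S1_eq_sum_weighted_sinh_sum:
  "S1 t = (\<Sum>s=1..t. central_binom_ratio s * weighted_sinh_sum s / (2 * real s))"
  unfolding S1_def
proof (rule sum.cong[OF refl])
  fix s assume "s \<in> {1..t}"
  have "pi ^ 2 / 36 = alpha ^ 2" unfolding alpha_def by (simp add: power_divide)
  have "(\<Sum>u=1..s. (-1) ^ u * pochhammer (- real s) u / (fact (s + u) * fact (2 * u - 1)) * (pi ^ 2 / 36) ^ u)
      = weighted_sinh_sum s / fact s"
    unfolding weighted_sinh_sum_def sum_divide_distrib
  proof (rule sum.cong[OF refl])
    fix u assume "u \<in> {1..s}"
    then have "u \<le> s" by simp
    show "(-1) ^ u * pochhammer (- real s) u / (fact (s + u) * fact (2 * u - 1)) * (pi ^ 2 / 36) ^ u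
        = binom_ratio s u * sinh_coeff u / fact s"
      unfolding pochhammer_minus_of_nat[OF \<open>u \<le> s\<close>] binom_ratio_eq_fact[OF \<open>u \<le> s\<close>]
        sinh_coeff_def power_mult \<open>pi ^ 2 / 36 = alpha ^ 2\<close>
      by simp
  qed
  then show "(-1) ^ s * pochhammer (1/2 - real s) (s + 1) / real s *
      (\<Sum>u=1..s. (-1) ^ u * pochhammer (- real s) u / (fact (s + u) * fact (2 * u - 1)) * (pi ^ 2 / 36) ^ u)
      = central_binom_ratio s * weighted_sinh_sum s / (2 * real s)"
    unfolding pochhammer_half_minus central_binom_ratio_def by simp
qed

lemma S1_eq_sum_ratio_tail:
  "S1 t = (\<Sum>u=1..t. sinh_coeff u * (1 - ratio_tail t u) / (2 * real u))"
proof -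
  have "S1 t = (\<Sum>s=1..t. \<Sum>u=1..t. central_binom_ratio s * binom_ratio s u * sinh_coeff u / (2 * real s))"
    unfolding S1_eq_sum_weighted_sinh_sum
  proof (rule sum.cong[OF refl])
    fix s assume "s \<in> {1..t}"
    then show "central_binom_ratio s * weighted_sinh_sum s / (2 * real s)
        = (\<Sum>u=1..t. central_binom_ratio s * binom_ratio s u * sinh_coeff u / (2 * real s))"
      using weighted_sinh_sum_eq[of s t] by (simp add: sum_distrib_left sum_divide_distrib mult.assoc)
  qed
  also have "\<dots> = (\<Sum>u=1..t. \<Sum>s=1..t. central_binom_ratio s * binom_ratio s u * sinh_coeff u / (2 * real s))"
    by (rule sum.swap)
  also have "\<dots> = (\<Sum>u=1..t. sinh_coeff u * (1 - ratio_tail t u) / (2 * real u))"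
  proof (rule sum.cong[OF refl])
    fix u assume "u \<in> {1..t}"
    then have "(\<Sum>s=1..t. central_binom_ratio s * binom_ratio s u / real s) = (1 - ratio_tail t u) / real u"
      using ratio_tail_eq[of u t] by (simp add: field_simps)
    moreover have "(\<Sum>s=1..t. central_binom_ratio s * binom_ratio s u * sinh_coeff u / (2 * real s))
        = sinh_coeff u / 2 * (\<Sum>s=1..t. central_binom_ratio s * binom_ratio s u / real s)"
      by (simp add: sum_distrib_left field_simps)
    ultimately show "(\<Sum>s=1..t. central_binom_ratio s * binom_ratio s u * sinh_coeff u / (2 * real s))
        = sinh_coeff u * (1 - ratio_tail t u) / (2 * real u)"
      by simp
  qed
  finally show ?thesis .
qed

lemma sum_sinh_coeff_div_minus_S1_bounds:
  "0 \<le> (\<Sum>u=1..t. sinh_coeff u / (2 * real u)) - S1 t"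
  "(\<Sum>u=1..t. sinh_coeff u / (2 * real u)) - S1 t \<le> 2 / 5 * central_binom_ratio t"
proof -
  have diff: "(\<Sum>u=1..t. sinh_coeff u / (2 * real u)) - S1 t
      = (\<Sum>u=1..t. sinh_coeff u * ratio_tail t u / (2 * real u))"
    unfolding S1_eq_sum_ratio_tail sum_subtractf[symmetric]
    by (intro sum.cong refl) (simp add: field_simps)
  show "0 \<le> (\<Sum>u=1..t. sinh_coeff u / (2 * real u)) - S1 t"
    unfolding diff using ratio_tail_bounds sinh_coeff_nonneg by (intro sum_nonneg) auto
  have "(\<Sum>u=1..t. sinh_coeff u * ratio_tail t u / (2 * real u))
      \<le> (\<Sum>u=1..t. central_binom_ratio t * sinh_coeff u)"
  proof (rule sum_mono)
    fix u assume "u \<in> {1..t}"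
    then have "sinh_coeff u * ratio_tail t u \<le> sinh_coeff u * (2 * real u * central_binom_ratio t)"
      using ratio_tail_bounds[of u t] sinh_coeff_nonneg by (intro mult_left_mono) auto
    then show "sinh_coeff u * ratio_tail t u / (2 * real u) \<le> central_binom_ratio t * sinh_coeff u"
      using \<open>u \<in> {1..t}\<close> by (simp add: field_simps)
  qed
  also have "\<dots> \<le> central_binom_ratio t * (2 / 5)"
    unfolding sum_distrib_left[symmetric]
    using sum_sinh_coeff_le central_binom_ratio_pos[of t] by (intro mult_left_mono) auto
  finally show "(\<Sum>u=1..t. sinh_coeff u / (2 * real u)) - S1 t \<le> 2 / 5 * central_binom_ratio t"
    unfolding diff by simp
qed

lemma LIMSEQ_S1: "S1 \<longlonglongrightarrow> cosh alpha - 1"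
proof -
  have "(\<lambda>t. (\<Sum>u=1..t. sinh_coeff u / (2 * real u)) - S1 t) \<longlonglongrightarrow> 0"
  proof (rule Lim_null_comparison)
    show "\<forall>\<^sub>F t in sequentially. norm ((\<Sum>u=1..t. sinh_coeff u / (2 * real u)) - S1 t)
        \<le> 2 / 5 * central_binom_ratio t"
      using sum_sinh_coeff_div_minus_S1_bounds by (intro always_eventually allI) simp
    show "(\<lambda>t. 2 / 5 * central_binom_ratio t) \<longlonglongrightarrow> 0"
      using tendsto_mult_left[OF LIMSEQ_central_binom_ratio, of "2 / 5"] by simp
  qed
  from tendsto_diff[OF LIMSEQ_sum_sinh_coeff_div this] show ?thesis by simp
qed

section \<open>Envelopes\<close>

definition envelope :: "real \<Rightarrow> nat \<Rightarrow> real" where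
  "envelope K t = (2 * real t + 1) * central_binom_ratio t
     * (- alpha * sinh alpha / (2 * real t) + K / real t ^ 2)"

lemma LIMSEQ_envelope: "envelope K \<longlonglongrightarrow> 0"
proof -
  define L where "L = alpha * sinh alpha"
  have "(\<lambda>t. - L - L / 2 * (1 / real t) + 2 * K * (1 / real t) + K * (1 / real t) * (1 / real t))
      \<longlonglongrightarrow> - L - L / 2 * 0 + 2 * K * 0 + K * 0 * 0"
    by (intro tendsto_intros lim_inverse_n')
  moreover have "\<forall>\<^sub>F t in sequentially.
      - L - L / 2 * (1 / real t) + 2 * K * (1 / real t) + K * (1 / real t) * (1 / real t)
      = (2 * real t + 1) * (- L / (2 * real t) + K / real t ^ 2)"
    using eventually_gt_at_top[of "0::nat"]
    by eventually_elim (simp add: field_simps power2_eq_square)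
  ultimately have "(\<lambda>t. (2 * real t + 1) * (- L / (2 * real t) + K / real t ^ 2)) \<longlonglongrightarrow> - L"
    by (auto elim: Lim_transform_eventually)
  from tendsto_mult[OF LIMSEQ_central_binom_ratio this] show ?thesis
    unfolding envelope_def L_def by (simp add: ac_simps)
qed

lemma S1_increment_minus_envelope_increment:
  assumes "1 \<le> m"
  defines "x \<equiv> real (Suc m)" and "y \<equiv> real m"
  shows "(S1 (Suc m) - S1 m) - (envelope K (Suc m) - envelope K m)
    = central_binom_ratio (Suc m) * (weighted_sinh_sum (Suc m) * x * y ^ 2
        - alpha * sinh alpha * (x + 1) * x * y + 2 * K * (3 * x ^ 2 - 1)) / (2 * x ^ 2 * y ^ 2)"
proof -
  define B J L where "B = central_binom_ratio (Suc m)" and "J = weighted_sinh_sum (Suc m)"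
    and "L = alpha * sinh alpha"
  have "x \<noteq> 0" "y \<noteq> 0" "x = y + 1" using assms by (simp_all add: x_def y_def)
  have "S1 (Suc m) - S1 m = B * J / (2 * x)"
    unfolding S1_eq_sum_weighted_sinh_sum B_def J_def x_def by simp
  moreover have "envelope K (Suc m) = (2 * x + 1) * B * (- L / (2 * x) + K / x ^ 2)"
    unfolding envelope_def B_def L_def x_def by simp
  moreover have "envelope K m = 2 * x * B * (- L / (2 * y) + K / y ^ 2)"
    unfolding envelope_def B_def L_def x_def y_def central_binom_ratio_Suc by (simp add: field_simps)
  moreover have "B * J / (2 * x) - ((2 * x + 1) * B * (- L / (2 * x) + K / x ^ 2)
           - 2 * x * B * (- L / (2 * y) + K / y ^ 2))
      = B * (J * x * y ^ 2 - L * (x + 1) * x * y + 2 * K * (3 * x ^ 2 - 1)) / (2 * x ^ 2 * y ^ 2)"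
    using \<open>x \<noteq> 0\<close> \<open>y \<noteq> 0\<close> by (simp add: field_simps)
      (simp add: \<open>x = y + 1\<close> power_numeral_reduce algebra_simps)
  ultimately show ?thesis unfolding B_def J_def L_def by simp
qed

lemma envelope_increment_less_S1_increment:
  assumes "1 \<le> m"
  shows "envelope (13/25) (Suc m) - envelope (13/25) m < S1 (Suc m) - S1 m"
proof -
  define x y J L where "x = real (Suc m)" and "y = real m"
    and "J = weighted_sinh_sum (Suc m)" and "L = alpha * sinh alpha"
  have "2 \<le> x" "y = x - 1" using assms by (simp_all add: x_def y_def)
  have "L * x - 2 / 5 \<le> J * x"
    using weighted_sinh_sum_ge[of "Suc m"] \<open>2 \<le> x\<close> unfolding J_def L_def x_def
    by (simp add: field_simps)
  then have "(L * x - 2 / 5) * y ^ 2 \<le> J * x * y ^ 2"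
    by (intro mult_right_mono) auto
  moreover have "L * (x * y) \<le> 2 / 5 * (x * y)"
    using alpha_sinh_alpha_bounds \<open>2 \<le> x\<close> \<open>y = x - 1\<close> unfolding L_def
    by (intro mult_right_mono) auto
  moreover have "(L * x - 2 / 5) * y ^ 2 - L * (x + 1) * x * y + 2 * (13/25) * (3 * x ^ 2 - 1)
      = - 2 * (L * (x * y)) - 2 / 5 * y ^ 2 + 78/25 * x ^ 2 - 26/25"
    unfolding \<open>y = x - 1\<close> by (simp add: field_simps power2_eq_square)
  moreover have "- 2 * (2 / 5 * (x * y)) - 2 / 5 * y ^ 2 + 78/25 * x ^ 2 - 26/25
      = 48/25 * x ^ 2 + 8/5 * x - 36/25"
    unfolding \<open>y = x - 1\<close> by (simp add: field_simps power2_eq_square)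
  moreover have "x \<le> x ^ 2"
    using \<open>2 \<le> x\<close> by (simp add: power2_eq_square)
  ultimately have "0 < J * x * y ^ 2 - L * (x + 1) * x * y + 2 * (13/25) * (3 * x ^ 2 - 1)"
    using \<open>2 \<le> x\<close> by linarith
  then have "0 < central_binom_ratio (Suc m)
      * (J * x * y ^ 2 - L * (x + 1) * x * y + 2 * (13/25) * (3 * x ^ 2 - 1)) / (2 * x ^ 2 * y ^ 2)"
    using central_binom_ratio_pos[of "Suc m"] \<open>2 \<le> x\<close> \<open>y = x - 1\<close> by simp
  then show ?thesis
    using S1_increment_minus_envelope_increment[OF assms, of "13/25"]
    unfolding x_def y_def J_def L_def by simp
qed

lemma S1_increment_less_envelope_increment:
  assumes "1 \<le> m"
  shows "S1 (Suc m) - S1 m < envelope (-1/8) (Suc m) - envelope (-1/8) m"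
proof -
  define x y J L where "x = real (Suc m)" and "y = real m"
    and "J = weighted_sinh_sum (Suc m)" and "L = alpha * sinh alpha"
  have "2 \<le> x" "y = x - 1" using assms by (simp_all add: x_def y_def)
  have "J * x * y ^ 2 \<le> L * x * y ^ 2"
    using weighted_sinh_sum_le[of "Suc m"] \<open>2 \<le> x\<close> unfolding J_def L_def
    by (intro mult_right_mono) auto
  moreover have "0 \<le> L * (x * y)"
    using alpha_sinh_alpha_bounds \<open>2 \<le> x\<close> \<open>y = x - 1\<close> unfolding L_def by simp
  moreover have "L * x * y ^ 2 - L * (x + 1) * x * y = - 2 * (L * (x * y))"
    unfolding \<open>y = x - 1\<close> by (simp add: algebra_simps power2_eq_square)
  moreover have "4 \<le> x ^ 2"
    using \<open>2 \<le> x\<close> by (simp add: power2_eq_square mult_mono[of 2 x 2 x, simplified])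
  moreover have "2 * (-1/8) * (3 * x ^ 2 - 1) = - 3/4 * x ^ 2 + 1/4"
    by (simp add: field_simps)
  ultimately have "J * x * y ^ 2 - L * (x + 1) * x * y + 2 * (-1/8) * (3 * x ^ 2 - 1) < 0"
    by linarith
  then have "central_binom_ratio (Suc m)
      * (J * x * y ^ 2 - L * (x + 1) * x * y + 2 * (-1/8) * (3 * x ^ 2 - 1)) / (2 * x ^ 2 * y ^ 2) < 0"
    using central_binom_ratio_pos[of "Suc m"] \<open>2 \<le> x\<close> \<open>y = x - 1\<close>
    by (simp add: divide_neg_pos mult_pos_neg)
  then show ?thesis
    using S1_increment_minus_envelope_increment[OF assms, of "-1/8"]
    unfolding x_def y_def J_def L_def by simp
qed

lemma S1_minus_cosh_less_envelope:
  assumes "1 \<le> t"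
  shows "S1 t - (cosh alpha - 1) < envelope (13/25) t"
proof (rule less_if_increments_less
    [where g = "\<lambda>n. S1 n - (cosh alpha - 1)" and f = "envelope (13/25)" and k = 1])
  show "(\<lambda>n. (S1 n - (cosh alpha - 1)) - envelope (13/25) n) \<longlonglongrightarrow> 0"
    using tendsto_diff[OF tendsto_diff[OF LIMSEQ_S1 tendsto_const[of "cosh alpha - 1"]] LIMSEQ_envelope] by simp
  show "envelope (13/25) (Suc m) - envelope (13/25) m
      < (S1 (Suc m) - (cosh alpha - 1)) - (S1 m - (cosh alpha - 1))" if "1 \<le> m" for m
    using envelope_increment_less_S1_increment[OF that] by simp
qed (rule assms)

lemma envelope_less_S1_minus_cosh:
  assumes "1 \<le> t"
  shows "envelope (-1/8) t < S1 t - (cosh alpha - 1)"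
proof (rule less_if_increments_less
    [where f = "\<lambda>n. S1 n - (cosh alpha - 1)" and g = "envelope (-1/8)" and k = 1])
  show "(\<lambda>n. envelope (-1/8) n - (S1 n - (cosh alpha - 1))) \<longlonglongrightarrow> 0"
    using tendsto_diff[OF LIMSEQ_envelope tendsto_diff[OF LIMSEQ_S1 tendsto_const[of "cosh alpha - 1"]]] by simp
  show "(S1 (Suc m) - (cosh alpha - 1)) - (S1 m - (cosh alpha - 1))
      < envelope (-1/8) (Suc m) - envelope (-1/8) m" if "1 \<le> m" for m
    using S1_increment_less_envelope_increment[OF that] by simp
qed (rule assms)

theorem mainTheorem10:
  fixes t :: nat
  assumes "t \<ge> 1"
  shows "- 1 / (8 * real t ^ 2) <
           S1 t / ((-1)^t * ((-3/2) gchoose t))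
           - ((-1)^t / ((-3/2) gchoose t)) * (cosh alpha - 1)
           + alpha * sinh alpha / (2 * real t)
       \<and> S1 t / ((-1)^t * ((-3/2) gchoose t))
           - ((-1)^t / ((-3/2) gchoose t)) * (cosh alpha - 1)
           + alpha * sinh alpha / (2 * real t) < 13 / (25 * real t ^ 2)"
proof -
  define g where "g = (2 * real t + 1) * central_binom_ratio t"
  have "0 < g" unfolding g_def using central_binom_ratio_pos[of t] by simp
  have g_eq: "(-1) ^ t * ((-3/2) gchoose t) = g"
    unfolding g_def by (rule gbinomial_minus_three_halves)
  have "(-1::real) ^ t * (-1) ^ t = 1"
    by (simp flip: power_mult_distrib)
  then have "(-3/2) gchoose t = (-1) ^ t * g"
    unfolding g_eq[symmetric] by (simp flip: mult.assoc)
  then have "(-1) ^ t / ((-3/2) gchoose t) = 1 / g"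
    by simp
  then have expr: "S1 t / ((-1)^t * ((-3/2) gchoose t)) - ((-1)^t / ((-3/2) gchoose t)) * (cosh alpha - 1)
      + alpha * sinh alpha / (2 * real t) = (S1 t - (cosh alpha - 1)) / g + alpha * sinh alpha / (2 * real t)"
    unfolding g_eq by (simp add: diff_divide_distrib)
  have envelope_div: "envelope K t / g = - alpha * sinh alpha / (2 * real t) + K / real t ^ 2" for K
    unfolding envelope_def g_def using central_binom_ratio_pos[of t] by simp
  show ?thesis
    unfolding expr
    using divide_strict_right_mono[OF S1_minus_cosh_less_envelope[OF assms] \<open>0 < g\<close>]
      divide_strict_right_mono[OF envelope_less_S1_minus_cosh[OF assms] \<open>0 < g\<close>]
      envelope_div[of "13/25"] envelope_div[of "-1/8"]
    by simp
qed

end
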